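(* Let $\mathsf M$ be an oriented matroid with tope-pairs poset $\mathcal Q$, and let $\rho:\mathcal Q\to\mathcal Q$, $\rho(R,T)=(-T,R)$. Then $n\mapsto\rho^n$ defines an action of $\mathbb Z_4$ on the order complex $\Delta(\mathcal Q)$ by simplicial automorphisms, and hence a simplicial action of $\mathbb Z_4$ on $|\mathcal Q|$.
   Context: Topes of an oriented matroid on ground set $E$ are its maximal covectors, sign vectors in $\{+,-,0\}^E$; $-T$ is componentwise negation. The separating set is $S(X,Y)=\{e\in E: X_e=-Y_e\neq0\}$; for a tope $B$, $T\le_B R$ iff $S(B,T)\subseteq S(B,R)$. The tope-pairs poset $\mathcal Q$ is $\mathcal T\times\mathcal T$ ($\mathcal T$ the set of topes) with $(T,R)\le(T',R')$ iff $T\le_{T'}R\le_{T'}R'$. $\Delta(\mathcal Q)$ is the abstract simplicial complex whose simplices are the chains of $\mathcal Q$, and $|\mathcal Q|$ is its geometric realization. *)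

theory Defs
  imports Main
begin

datatype sign = Pos | Neg | Zero

fun neg_sign :: "sign \<Rightarrow> sign" where
  "neg_sign Pos = Neg" | "neg_sign Neg = Pos" | "neg_sign Zero = Zero"

type_synonym 'e signvec = "'e \<Rightarrow> sign"

definition zero_sv :: "'e signvec" where
  "zero_sv = (\<lambda>e. Zero)"

definition neg_sv :: "'e signvec \<Rightarrow> 'e signvec" where
  "neg_sv X = (\<lambda>e. neg_sign (X e))"

definition comp_sv :: "'e signvec \<Rightarrow> 'e signvec \<Rightarrow> 'e signvec" where
  "comp_sv X Y = (\<lambda>e. if X e \<noteq> Zero then X e else Y e)"

definition sep :: "'e signvec \<Rightarrow> 'e signvec \<Rightarrow> 'e set" where
  "sep X Y = {e. X e = neg_sign (Y e) \<and> X e \<noteq> Zero}"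

definition conf_le :: "'e signvec \<Rightarrow> 'e signvec \<Rightarrow> bool" where
  "conf_le X Y \<longleftrightarrow> (\<forall>e. X e = Zero \<or> X e = Y e)"

text \<open>Covector axioms of an oriented matroid on a finite ground set.\<close>
definition oriented_matroid :: "('e::finite) signvec set \<Rightarrow> bool" where
  "oriented_matroid L \<longleftrightarrow>
     zero_sv \<in> L \<and>
     (\<forall>X\<in>L. neg_sv X \<in> L) \<and>
     (\<forall>X\<in>L. \<forall>Y\<in>L. comp_sv X Y \<in> L) \<and>
     (\<forall>X\<in>L. \<forall>Y\<in>L. \<forall>e\<in>sep X Y. \<exists>Z\<in>L. Z e = Zero \<and>
         (\<forall>f. f \<notin> sep X Y \<longrightarrow> Z f = comp_sv X Y f))"

definition topes :: "'e signvec set \<Rightarrow> 'e signvec set" where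
  "topes L = {T\<in>L. \<forall>Y\<in>L. conf_le T Y \<longrightarrow> Y = T}"

definition tope_le :: "'e signvec \<Rightarrow> 'e signvec \<Rightarrow> 'e signvec \<Rightarrow> bool" where
  "tope_le B T R \<longleftrightarrow> sep B T \<subseteq> sep B R"

definition tope_pairs :: "'e signvec set \<Rightarrow> ('e signvec \<times> 'e signvec) set" where
  "tope_pairs L = topes L \<times> topes L"

definition tp_le :: "('e signvec \<times> 'e signvec) \<Rightarrow> ('e signvec \<times> 'e signvec) \<Rightarrow> bool" where
  "tp_le p q \<longleftrightarrow> tope_le (fst q) (fst p) (snd p) \<and> tope_le (fst q) (snd p) (snd q)"

definition order_complex :: "'a set \<Rightarrow> ('a \<Rightarrow> 'a \<Rightarrow> bool) \<Rightarrow> 'a set set" where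
  "order_complex V le = {C. C \<subseteq> V \<and> finite C \<and> C \<noteq> {} \<and>
                            (\<forall>x\<in>C. \<forall>y\<in>C. le x y \<or> le y x)}"

definition simplicial_automorphism :: "'a set \<Rightarrow> 'a set set \<Rightarrow> ('a \<Rightarrow> 'a) \<Rightarrow> bool" where
  "simplicial_automorphism V K f \<longleftrightarrow>
     bij_betw f V V \<and> (\<forall>S. S \<subseteq> V \<longrightarrow> (S \<in> K \<longleftrightarrow> f ` S \<in> K))"

definition rho :: "('e signvec \<times> 'e signvec) \<Rightarrow> ('e signvec \<times> 'e signvec)" where
  "rho p = (neg_sv (snd p), fst p)"

definition rho_act :: "int \<Rightarrow> ('e signvec \<times> 'e signvec) \<Rightarrow> ('e signvec \<times> 'e signvec)" where
  "rho_act n = rho ^^ nat (n mod 4)"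

end

theory Submission
  imports Defs
begin

text \<open>All topes of an oriented matroid have the same support, so on that support every separating
set is just the set where two topes differ. The tope-pair inequalities
  \<open>S(T',T) \<subseteq> S(T',R) \<subseteq> S(T',R')\<close>
then translate, by elementwise sign bookkeeping, into
  \<open>S(-R,-R') \<subseteq> S(-R,T') \<subseteq> S(-R,T)\<close>,
i.e. \<open>\<rho>\<close> reverses the order of \<open>\<Q>\<close>. Since \<open>\<rho>\<^sup>4 = id\<close>, \<open>\<rho>\<close> is a bijection of \<open>\<Q>\<close> that preserves
and reflects comparability, hence maps chains onto chains; so every power of \<open>\<rho>\<close> is a simplicial
automorphism of \<open>\<Delta>(\<Q>)\<close>, and reducing exponents mod 4 gives the \<open>\<int>\<^sub>4\<close>-action.\<close>

lemma neg_sign_neg_sign [simp]: "neg_sign (neg_sign x) = x"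
  by (cases x) auto

lemma neg_sv_neg_sv [simp]: "neg_sv (neg_sv X) = X"
  by (simp add: neg_sv_def)

lemma rho_rho_rho_rho: "rho (rho (rho (rho p))) = p"
  by (simp add: rho_def)

lemma funpow_rho_4: "rho ^^ 4 = id"
  by (simp add: fun_eq_iff numeral_eq_Suc rho_rho_rho_rho)

lemma rho_act_of_nat: "rho_act (int n) = rho ^^ n"
proof
  fix p
  have "nat (int n mod 4) = n mod 4"
    by (simp add: nat_mod_as_int)
  then show "rho_act (int n) p = (rho ^^ n) p"
    by (simp add: rho_act_def funpow_mod_eq funpow_rho_4)
qed

lemma rho_act_add: "rho_act (m + n) = rho_act m \<circ> rho_act n"
proof -
  have "rho_act (m + n) = rho_act (m mod 4 + n mod 4)"
    by (simp add: rho_act_def mod_add_eq)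
  also have "m mod 4 + n mod 4 = int (nat (m mod 4) + nat (n mod 4))"
    by simp
  also have "rho_act \<dots> = rho_act m \<circ> rho_act n"
    by (simp only: rho_act_of_nat funpow_add) (simp add: rho_act_def)
  finally show ?thesis .
qed

lemma simplicial_automorphism_id: "simplicial_automorphism V K id"
  by (simp add: simplicial_automorphism_def)

lemma simplicial_automorphism_comp:
  assumes "simplicial_automorphism V K f" and "simplicial_automorphism V K g"
  shows "simplicial_automorphism V K (f \<circ> g)"
proof -
  have bij_f: "bij_betw f V V" and f: "\<And>S. S \<subseteq> V \<Longrightarrow> S \<in> K \<longleftrightarrow> f ` S \<in> K"
    using assms(1) by (auto simp: simplicial_automorphism_def)
  have bij_g: "bij_betw g V V" and g: "\<And>S. S \<subseteq> V \<Longrightarrow> S \<in> K \<longleftrightarrow> g ` S \<in> K"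
    using assms(2) by (auto simp: simplicial_automorphism_def)
  have "S \<in> K \<longleftrightarrow> (f \<circ> g) ` S \<in> K" if "S \<subseteq> V" for S
  proof -
    have "g ` S \<subseteq> V"
      using bij_g \<open>S \<subseteq> V\<close> by (auto simp: bij_betw_def)
    then show ?thesis
      using f[of "g ` S"] g[OF \<open>S \<subseteq> V\<close>] by (simp add: image_comp)
  qed
  with bij_f bij_g show ?thesis
    by (simp add: simplicial_automorphism_def bij_betw_trans)
qed

lemma simplicial_automorphism_funpow:
  assumes "simplicial_automorphism V K f"
  shows "simplicial_automorphism V K (f ^^ n)"
proof (induction n)
  case 0
  show ?case
    unfolding funpow.simps(1) by (rule simplicial_automorphism_id)
next
  case (Suc n)
  then show ?case
    unfolding funpow.simps(2) by (rule simplicial_automorphism_comp[OF assms])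
qed

lemma simplicial_automorphism_order_complexI:
  assumes bij: "bij_betw f V V"
    and comparable: "\<And>x y. x \<in> V \<Longrightarrow> y \<in> V \<Longrightarrow>
                         (le (f x) (f y) \<or> le (f y) (f x)) \<longleftrightarrow> (le x y \<or> le y x)"
  shows "simplicial_automorphism V (order_complex V le) f"
proof -
  have "S \<in> order_complex V le \<longleftrightarrow> f ` S \<in> order_complex V le" if S: "S \<subseteq> V" for S
  proof -
    have "f ` S \<subseteq> V"
      using bij S by (auto simp: bij_betw_def)
    moreover have "finite (f ` S) \<longleftrightarrow> finite S"
      using bij S by (meson bij_betw_def finite_image_iff inj_on_subset)
    moreover have "(\<forall>x\<in>f ` S. \<forall>y\<in>f ` S. le x y \<or> le y x) \<longleftrightarrow> (\<forall>x\<in>S. \<forall>y\<in>S. le x y \<or> le y x)"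
      using comparable S by blast
    ultimately show ?thesis
      using S by (auto simp: order_complex_def)
  qed
  with bij show ?thesis
    by (simp add: simplicial_automorphism_def)
qed

lemma topes_same_zeros:
  assumes om: "oriented_matroid L" and T: "T \<in> topes L" and R: "R \<in> topes L"
  shows "T e = Zero \<longleftrightarrow> R e = Zero"
proof -
  have "A e \<noteq> Zero" if A: "A \<in> topes L" and B: "B \<in> topes L" and "B e \<noteq> Zero" for A B
  proof
    assume "A e = Zero"
    have "comp_sv A B \<in> L"
      using om A B by (auto simp: oriented_matroid_def topes_def)
    moreover have "conf_le A (comp_sv A B)"
      by (auto simp: conf_le_def comp_sv_def)
    ultimately have "comp_sv A B = A"
      using A by (auto simp: topes_def)
    then show False
      using \<open>A e = Zero\<close> \<open>B e \<noteq> Zero\<close> by (metis comp_sv_def)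
  qed
  with T R show ?thesis
    by blast
qed

lemma neg_sv_topes:
  assumes om: "oriented_matroid L" and T: "T \<in> topes L"
  shows "neg_sv T \<in> topes L"
proof -
  have "Y = neg_sv T" if "Y \<in> L" and "conf_le (neg_sv T) Y" for Y
  proof -
    have "neg_sv Y \<in> L"
      using om \<open>Y \<in> L\<close> by (auto simp: oriented_matroid_def)
    moreover have "conf_le T (neg_sv Y)"
      using \<open>conf_le (neg_sv T) Y\<close> unfolding conf_le_def neg_sv_def
      by (metis neg_sign.simps(3) neg_sign_neg_sign)
    ultimately have "neg_sv Y = T"
      using T by (auto simp: topes_def)
    then show ?thesis
      by auto
  qed
  moreover have "neg_sv T \<in> L"
    using om T by (auto simp: oriented_matroid_def topes_def)
  ultimately show ?thesis
    by (auto simp: topes_def)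
qed

lemma rho_tope_pairs:
  assumes "oriented_matroid L" and "p \<in> tope_pairs L"
  shows "rho p \<in> tope_pairs L"
  using assms neg_sv_topes by (auto simp: tope_pairs_def rho_def)

lemma bij_betw_rho_tope_pairs:
  assumes om: "oriented_matroid L"
  shows "bij_betw rho (tope_pairs L) (tope_pairs L)"
proof (rule bij_betw_byWitness[where f' = "\<lambda>(R, T). (T, neg_sv R)"])
  show "(\<lambda>(R, T). (T, neg_sv R)) ` tope_pairs L \<subseteq> tope_pairs L"
    using neg_sv_topes[OF om] by (auto simp: tope_pairs_def)
  show "rho ` tope_pairs L \<subseteq> tope_pairs L"
    using rho_tope_pairs[OF om] by blast
qed (auto simp: rho_def)

lemma tp_le_rho_antitone:
  assumes om: "oriented_matroid L"
    and p: "p \<in> tope_pairs L" and q: "q \<in> tope_pairs L" and "tp_le p q"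
  shows "tp_le (rho q) (rho p)"
proof -
  obtain T R T' R' where pq: "p = (T, R)" "q = (T', R')"
    by fastforce
  have topes: "T \<in> topes L" "R \<in> topes L" "T' \<in> topes L" "R' \<in> topes L"
    using p q pq by (auto simp: tope_pairs_def)
  have le: "T' e = neg_sign (T e) \<and> T' e \<noteq> Zero \<longrightarrow> T' e = neg_sign (R e)"
    "T' e = neg_sign (R e) \<and> T' e \<noteq> Zero \<longrightarrow> T' e = neg_sign (R' e)" for e
    using \<open>tp_le p q\<close> pq unfolding tp_le_def tope_le_def sep_def by auto
  have zeros: "R e = Zero \<longleftrightarrow> T e = Zero" "T' e = Zero \<longleftrightarrow> T e = Zero" "R' e = Zero \<longleftrightarrow> T e = Zero"
    for e
    using topes topes_same_zeros[OF om] by blast+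
  have "(e \<in> sep (neg_sv R) (neg_sv R') \<longrightarrow> e \<in> sep (neg_sv R) T')
      \<and> (e \<in> sep (neg_sv R) T' \<longrightarrow> e \<in> sep (neg_sv R) T)" for e
    using le[of e] zeros[of e] unfolding sep_def neg_sv_def
    by (cases "T e"; cases "R e"; cases "T' e"; cases "R' e") simp_all
  then have "sep (neg_sv R) (neg_sv R') \<subseteq> sep (neg_sv R) T'" "sep (neg_sv R) T' \<subseteq> sep (neg_sv R) T"
    by blast+
  then show ?thesis
    using pq by (simp add: tp_le_def tope_le_def rho_def)
qed

lemma tp_le_rho_iff:
  assumes om: "oriented_matroid L" and p: "p \<in> tope_pairs L" and q: "q \<in> tope_pairs L"
  shows "tp_le (rho q) (rho p) \<longleftrightarrow> tp_le p q"
proof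
  assume "tp_le (rho q) (rho p)"
  have rho: "x \<in> tope_pairs L \<Longrightarrow> rho x \<in> tope_pairs L" for x
    using rho_tope_pairs[OF om] .
  note antitone = tp_le_rho_antitone[OF om]
  from \<open>tp_le (rho q) (rho p)\<close> have "tp_le (rho (rho p)) (rho (rho q))"
    by (rule antitone[rotated 2]) (use p q rho in auto)
  then have "tp_le (rho (rho (rho q))) (rho (rho (rho p)))"
    by (rule antitone[rotated 2]) (use p q rho in auto)
  then have "tp_le (rho (rho (rho (rho p)))) (rho (rho (rho (rho q))))"
    by (rule antitone[rotated 2]) (use p q rho in auto)
  then show "tp_le p q"
    by (simp only: rho_rho_rho_rho)
qed (rule tp_le_rho_antitone[OF om p q])

lemma simplicial_automorphism_rho:
  assumes om: "oriented_matroid L"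
  shows "simplicial_automorphism (tope_pairs L) (order_complex (tope_pairs L) tp_le) rho"
  using bij_betw_rho_tope_pairs[OF om]
  by (rule simplicial_automorphism_order_complexI) (auto simp: tp_le_rho_iff[OF om])

theorem theorem3p15:
  fixes L :: "('e::finite) signvec set"
  assumes "oriented_matroid L"
  shows "(\<forall>p\<in>tope_pairs L. (rho ^^ 4) p = p)
       \<and> (\<forall>n::nat. \<forall>p\<in>tope_pairs L. rho_act (int n) p = (rho ^^ n) p)
       \<and> (\<forall>p\<in>tope_pairs L. rho_act 0 p = p)
       \<and> (\<forall>m n. \<forall>p\<in>tope_pairs L. rho_act (m + n) p = rho_act m (rho_act n p))
       \<and> (\<forall>n. simplicial_automorphism (tope_pairs L)
                (order_complex (tope_pairs L) tp_le) (rho_act n))"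
proof (intro conjI allI ballI)
  fix n :: int
  show "simplicial_automorphism (tope_pairs L) (order_complex (tope_pairs L) tp_le) (rho_act n)"
    unfolding rho_act_def by (rule simplicial_automorphism_funpow[OF simplicial_automorphism_rho[OF assms]])
next
  show "rho_act 0 p = p" for p
    by (simp add: rho_act_def)
qed (simp_all add: funpow_rho_4 rho_act_of_nat rho_act_add)

end
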